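(* Let $m$ be an integer with $3\le m\le 6$. Then for every integer $n\ge m-1$, $$F_{n+2,2}\equiv F_{n,2}\pmod{2^m},$$ i.e. from the term of index $m-1$ onward the sequence $(F_{n,2}\bmod 2^m)_{n\ge0}$ is periodic with period $2$.
   Context: For positive integers $r\le m\le n$, $S_r(n,m)$ denotes the $r$-Stirling number of the second kind: the number of partitions of $\{1,\dots,n\}$ into $m$ non-empty blocks such that $1,\dots,r$ lie in pairwise distinct blocks. For a positive integer $r$ and integer $n\ge 0$, the $r$-Fubini number is $F_{n,r}=\sum_{k=0}^{n}(k+r)!\,S_r(n+r,k+r)$. *)

theory Defs
  imports Main "HOL-Library.Disjoint_Sets"
begin

definition r_stirling :: "nat \<Rightarrow> nat \<Rightarrow> nat \<Rightarrow> nat" where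
  "r_stirling r n m = card {P. partition_on {1..n} P \<and> card P = m \<and>
      (\<forall>i\<in>{1..r}. \<forall>j\<in>{1..r}. \<forall>B\<in>P. i \<in> B \<and> j \<in> B \<longrightarrow> i = j)}"

definition r_fubini :: "nat \<Rightarrow> nat \<Rightarrow> nat" where
  "r_fubini n r = (\<Sum>k=0..n. fact (k + r) * r_stirling r (n + r) (k + r))"

end

theory Submission
  imports Defs
begin

text \<open>
  Removing the largest element from a partition counted by \<open>S\<^sub>r(n+1, k+1)\<close> gives the
  recurrence \<open>S\<^sub>r(n+1, k+1) = (k+1) S\<^sub>r(n, k+1) + S\<^sub>r(n, k)\<close>, so the numbers
  \<open>u\<^sub>n(k) = (k+r)! S\<^sub>r(n+r, k+r)\<close> whose sum is \<open>F\<^sub>n\<^sub>,\<^sub>r\<close> satisfy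
  \<open>u\<^sub>n\<^sub>+\<^sub>1(k) = (k+r) (u\<^sub>n(k) + u\<^sub>n(k-1))\<close>. Since \<open>2\<^sup>6\<close> divides \<open>8!\<close>, modulo \<open>2\<^sup>6\<close> only
  \<open>u\<^sub>n(0), \<dots>, u\<^sub>n(5)\<close> matter for \<open>r = 2\<close>, and these evolve by an explicit map on
  \<open>(\<int>/2\<^sup>6)\<^sup>6\<close>. Iterating it shows that this vector is periodic with period 8 from
  \<open>n = 5\<close> on, and the claim is then a finite computation.
\<close>

definition separates :: "'a set \<Rightarrow> 'a set set \<Rightarrow> bool" where
  "separates R P \<longleftrightarrow> (\<forall>i\<in>R. \<forall>j\<in>R. \<forall>B\<in>P. i \<in> B \<and> j \<in> B \<longrightarrow> i = j)"

definition separating_partitions :: "'a set \<Rightarrow> 'a set \<Rightarrow> nat \<Rightarrow> 'a set set set" where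
  "separating_partitions R A k = {P. partition_on A P \<and> card P = k \<and> separates R P}"

definition insert_into_block :: "'a \<Rightarrow> 'a set set \<Rightarrow> 'a set \<Rightarrow> 'a set set" where
  "insert_into_block a P B = (\<lambda>X. if X = B then insert a X else X) ` P"

lemma partition_on_mem_subset: "partition_on A P \<Longrightarrow> X \<in> P \<Longrightarrow> X \<subseteq> A"
  by (auto simp: partition_on_def)

lemma partition_on_mem_nonempty: "partition_on A P \<Longrightarrow> X \<in> P \<Longrightarrow> X \<noteq> {}"
  by (auto simp: partition_on_def)

lemma partition_on_mem_eq:
  "partition_on A P \<Longrightarrow> X \<in> P \<Longrightarrow> Y \<in> P \<Longrightarrow> x \<in> X \<Longrightarrow> x \<in> Y \<Longrightarrow> X = Y"
  unfolding partition_on_def disjoint_def by blast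

lemma partition_on_mem_Diff_singleton_nonempty:
  "partition_on A P \<Longrightarrow> {a} \<notin> P \<Longrightarrow> X \<in> P \<Longrightarrow> X - {a} \<noteq> {}"
  by (metis Diff_eq_empty_iff partition_on_mem_nonempty subset_singleton_iff)

lemma finite_separating_partitions: "finite A \<Longrightarrow> finite (separating_partitions R A k)"
  by (rule finite_subset[OF _ finitely_many_partition_on]) (auto simp: separating_partitions_def)

lemma separating_partitions_0_right:
  assumes "finite A" "A \<noteq> {}"
  shows "separating_partitions R A 0 = {}"
proof -
  have False if "partition_on A P" "card P = 0" for P
  proof -
    have "P = {}" using that finite_elements[OF assms(1)] by auto
    thus False using partition_onD1[OF \<open>partition_on A P\<close>] assms(2) by simp
  qed
  thus ?thesis by (auto simp: separating_partitions_def)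
qed

lemma partition_separating_all:
  assumes P: "partition_on A P" and sep: "separates A P"
  shows "P = (\<lambda>x. {x}) ` A"
proof -
  have block: "X = {x}" if "X \<in> P" "x \<in> X" for X x
    using that sep partition_on_mem_subset[OF P] by (auto simp: separates_def)
  have "{x} \<in> P" if x: "x \<in> A" for x
  proof -
    obtain X where "X \<in> P" "x \<in> X" using x partition_onD1[OF P] by blast
    thus ?thesis using block by simp
  qed
  moreover have "\<exists>x\<in>A. X = {x}" if "X \<in> P" for X
    using that block partition_on_mem_nonempty[OF P] partition_on_mem_subset[OF P] by blast
  ultimately show ?thesis by auto
qed

lemma separating_partitions_singleton_block:
  assumes fin: "finite A" and aA: "a \<notin> A" and aR: "a \<notin> R"
  shows "{P \<in> separating_partitions R (insert a A) (Suc k). {a} \<in> P}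
           = insert {a} ` separating_partitions R A k"
proof (intro equalityI subsetI)
  fix P' assume "P' \<in> {P \<in> separating_partitions R (insert a A) (Suc k). {a} \<in> P}"
  hence p: "partition_on (insert a A) P'" "card P' = Suc k" "separates R P'" "{a} \<in> P'"
    by (auto simp: separating_partitions_def)
  define P where "P = P' - {{a}}"
  have P': "P' = insert {a} P" "{a} \<notin> P" using p(4) by (auto simp: P_def)
  have "a \<notin> X" if "X \<in> P" for X
    using that partition_on_mem_eq[OF p(1) _ p(4)] by (auto simp: P_def)
  hence "disjnt {a} (\<Union>P)" by (auto simp: disjnt_def)
  hence "partition_on (insert a A - {a}) P" using p(1) P'(1) partition_on_insert by blast
  hence "partition_on A P" using aA by simp
  moreover have "card P = k"
    using p(2) P' finite_elements[OF _ p(1)] fin by (simp add: card_insert_if)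
  moreover have "separates R P" using p(3) by (auto simp: separates_def P_def)
  ultimately show "P' \<in> insert {a} ` separating_partitions R A k"
    using P'(1) by (auto simp: separating_partitions_def)
next
  fix P' assume "P' \<in> insert {a} ` separating_partitions R A k"
  then obtain P where P: "P' = insert {a} P" "partition_on A P" "card P = k" "separates R P"
    by (auto simp: separating_partitions_def)
  have aP: "{a} \<notin> P" using partition_on_mem_subset[OF P(2)] aA by blast
  have "disjnt {a} (\<Union>P)" using partition_onD1[OF P(2)] aA by (auto simp: disjnt_def)
  moreover have "partition_on (insert a A - {a}) P" using P(2) aA by simp
  ultimately have "partition_on (insert a A) P'"
    unfolding P(1) using partition_on_insert by blast
  moreover have "card P' = Suc k" using P aP finite_elements[OF fin P(2)] by simp
  moreover have "separates R P'" using P(4) aR by (auto simp: separates_def P(1))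
  ultimately show "P' \<in> {P \<in> separating_partitions R (insert a A) (Suc k). {a} \<in> P}"
    using P(1) by (auto simp: separating_partitions_def)
qed

lemma card_separating_partitions_singleton_block:
  assumes "finite A" "a \<notin> A" "a \<notin> R"
  shows "card {P \<in> separating_partitions R (insert a A) (Suc k). {a} \<in> P}
           = card (separating_partitions R A k)"
proof -
  have "{a} \<notin> P" if "P \<in> separating_partitions R A k" for P
    using that assms(2) partition_on_mem_subset by (fastforce simp: separating_partitions_def)
  hence "inj_on (insert {a}) (separating_partitions R A k)"
    by (metis inj_onI insert_ident)
  thus ?thesis using separating_partitions_singleton_block[OF assms] card_image by metis
qed

lemma insert_into_block_separating:
  assumes aA: "a \<notin> A" and aR: "a \<notin> R"
    and P: "P \<in> separating_partitions R A k" and B: "B \<in> P"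
  shows "insert_into_block a P B \<in> separating_partitions R (insert a A) k"
    and "{a} \<notin> insert_into_block a P B"
proof -
  have p: "partition_on A P" "card P = k" "separates R P"
    using P by (auto simp: separating_partitions_def)
  have aX: "a \<notin> X" if "X \<in> P" for X using that partition_on_mem_subset[OF p(1)] aA by blast
  have inj: "inj_on (\<lambda>X. if X = B then insert a X else X) P"
    by (rule inj_onI) (metis aX insert_iff)
  have "\<Union>(insert_into_block a P B) = insert a A"
    using partition_onD1[OF p(1)] B by (auto simp: insert_into_block_def)
  moreover have "disjnt X' Y'"
    if X': "X' \<in> insert_into_block a P B" and Y': "Y' \<in> insert_into_block a P B"
      and ne: "X' \<noteq> Y'" for X' Y'
  proof -
    obtain X where X: "X \<in> P" "X' = (if X = B then insert a X else X)"
      using X' unfolding insert_into_block_def by blast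
    obtain Y where Y: "Y \<in> P" "Y' = (if Y = B then insert a Y else Y)"
      using Y' unfolding insert_into_block_def by blast
    have XY: "X \<in> P" "Y \<in> P" "X \<noteq> Y" using X Y ne by auto
    have "X \<inter> Y = {}" using XY partition_on_mem_eq[OF p(1)] by blast
    thus ?thesis unfolding X(2) Y(2) disjnt_def using XY(3) aX[OF XY(1)] aX[OF XY(2)] by auto
  qed
  moreover have "{} \<notin> insert_into_block a P B"
    using partition_on_mem_nonempty[OF p(1)] by (auto simp: insert_into_block_def)
  ultimately have "partition_on (insert a A) (insert_into_block a P B)"
    by (rule partition_onI)
  moreover have "card (insert_into_block a P B) = k"
    unfolding insert_into_block_def using card_image[OF inj] p(2) by simp
  moreover have "separates R (insert_into_block a P B)"
    using p(3) aR by (auto simp: separates_def insert_into_block_def)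
  ultimately show "insert_into_block a P B \<in> separating_partitions R (insert a A) k"
    by (simp add: separating_partitions_def)
  show "{a} \<notin> insert_into_block a P B"
    using partition_on_mem_nonempty[OF p(1)] aX B by (auto simp: insert_into_block_def)
qed

lemma remove_point_insert_into_block:
  assumes "a \<notin> A" "partition_on A P"
  shows "(\<lambda>X. X - {a}) ` insert_into_block a P B = P"
proof -
  have "a \<notin> X" if "X \<in> P" for X using that partition_on_mem_subset assms by blast
  hence "(\<lambda>X. X - {a}) ` insert_into_block a P B = (\<lambda>X. X) ` P"
    unfolding insert_into_block_def image_image by (intro image_cong) auto
  thus ?thesis by simp
qed

lemma partition_remove_point:
  assumes P: "partition_on (insert a A) P" and aP: "{a} \<notin> P" and aA: "a \<notin> A"
  shows "partition_on A ((\<lambda>X. X - {a}) ` P)" and "inj_on (\<lambda>X. X - {a}) P"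
proof -
  note nonempty = partition_on_mem_Diff_singleton_nonempty[OF P aP]
  have same_block: "X = Y" if "X \<in> P" "Y \<in> P" "x \<in> X - {a}" "x \<in> Y - {a}" for X Y x
    using that partition_on_mem_eq[OF P] by blast
  show "inj_on (\<lambda>X. X - {a}) P"
  proof (rule inj_onI)
    fix X Y assume XY: "X \<in> P" "Y \<in> P" "X - {a} = Y - {a}"
    then obtain x where "x \<in> X - {a}" "x \<in> Y - {a}" using nonempty by blast
    with XY(1,2) show "X = Y" by (rule same_block)
  qed
  have "\<Union>((\<lambda>X. X - {a}) ` P) = A" using partition_onD1[OF P, symmetric] aA by auto
  moreover have "disjnt X' Y'"
    if "X' \<in> (\<lambda>X. X - {a}) ` P" "Y' \<in> (\<lambda>X. X - {a}) ` P" "X' \<noteq> Y'" for X' Y'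
    using that same_block unfolding disjnt_def by blast
  moreover have "{} \<notin> (\<lambda>X. X - {a}) ` P" using nonempty by blast
  ultimately show "partition_on A ((\<lambda>X. X - {a}) ` P)" by (intro partition_onI)
qed

lemma insert_into_block_remove_point:
  assumes P: "partition_on A P" and aP: "{a} \<notin> P" and B: "B \<in> P" "a \<in> B"
  shows "insert_into_block a ((\<lambda>X. X - {a}) ` P) (B - {a}) = P"
proof -
  have "(if X - {a} = B - {a} then insert a (X - {a}) else X - {a}) = X" if X: "X \<in> P" for X
  proof (cases "X = B")
    case False
    have "a \<notin> X" using partition_on_mem_eq[OF P X B(1)] B(2) False by blast
    moreover have "X - {a} \<noteq> B - {a}"
    proof
      assume eq: "X - {a} = B - {a}"
      obtain x where "x \<in> X - {a}"
        using partition_on_mem_Diff_singleton_nonempty[OF P aP X] by blast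
      thus False using eq partition_on_mem_eq[OF P X B(1)] False by blast
    qed
    ultimately show ?thesis by simp
  qed (use B in auto)
  hence "insert_into_block a ((\<lambda>X. X - {a}) ` P) (B - {a}) = (\<lambda>X. X) ` P"
    unfolding insert_into_block_def image_image by (intro image_cong) auto
  thus ?thesis by simp
qed

lemma separating_partitions_no_singleton_block:
  assumes aA: "a \<notin> A" and aR: "a \<notin> R"
  shows "{P \<in> separating_partitions R (insert a A) k. {a} \<notin> P}
           = (\<lambda>(P, B). insert_into_block a P B) ` (SIGMA P:separating_partitions R A k. P)"
proof (intro equalityI subsetI)
  fix P' assume "P' \<in> {P \<in> separating_partitions R (insert a A) k. {a} \<notin> P}"
  hence p: "partition_on (insert a A) P'" "card P' = k" "separates R P'" "{a} \<notin> P'"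
    by (auto simp: separating_partitions_def)
  obtain B where B: "B \<in> P'" "a \<in> B" using partition_onD1[OF p(1)] by blast
  define P where "P = (\<lambda>X. X - {a}) ` P'"
  have "partition_on A P" "inj_on (\<lambda>X. X - {a}) P'"
    using partition_remove_point[OF p(1,4) aA] by (simp_all add: P_def)
  moreover have "card P = k" using calculation(2) p(2) by (simp add: P_def card_image)
  moreover have "separates R P" using p(3) unfolding separates_def P_def by blast
  ultimately have "(P, B - {a}) \<in> (SIGMA P:separating_partitions R A k. P)"
    using B(1) by (auto simp: separating_partitions_def P_def)
  moreover have "P' = insert_into_block a P (B - {a})"
    using insert_into_block_remove_point[OF p(1,4) B] by (simp add: P_def)
  ultimately show "P' \<in> (\<lambda>(P, B). insert_into_block a P B) ` (SIGMA P:separating_partitions R A k. P)"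
    by force
next
  fix P' assume "P' \<in> (\<lambda>(P, B). insert_into_block a P B) ` (SIGMA P:separating_partitions R A k. P)"
  then obtain P B where "P \<in> separating_partitions R A k" "B \<in> P" "P' = insert_into_block a P B"
    by auto
  thus "P' \<in> {P \<in> separating_partitions R (insert a A) k. {a} \<notin> P}"
    using insert_into_block_separating[OF aA aR] by auto
qed

lemma card_separating_partitions_no_singleton_block:
  assumes fin: "finite A" and aA: "a \<notin> A" and aR: "a \<notin> R"
  shows "card {P \<in> separating_partitions R (insert a A) k. {a} \<notin> P}
           = k * card (separating_partitions R A k)"
proof -
  let ?Q = "separating_partitions R A k"
  have inj: "inj_on (\<lambda>(P, B). insert_into_block a P B) (SIGMA P:?Q. P)"
  proof (rule inj_onI, clarify)
    fix P B P2 B2 assume h: "P \<in> ?Q" "B \<in> P" "P2 \<in> ?Q" "B2 \<in> P2"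
      "insert_into_block a P B = insert_into_block a P2 B2"
    have p: "partition_on A P" "partition_on A P2" using h by (auto simp: separating_partitions_def)
    have "P2 = P"
      using remove_point_insert_into_block[OF aA p(1)] remove_point_insert_into_block[OF aA p(2)]
        h(5) by metis
    have aX: "a \<notin> X" if "X \<in> P" for X using that partition_on_mem_subset[OF p(1)] aA by blast
    have "insert a B \<in> insert_into_block a P2 B2"
      using h(2,5) unfolding insert_into_block_def by auto
    then obtain X where "X \<in> P" "insert a B = (if X = B2 then insert a X else X)"
      using \<open>P2 = P\<close> unfolding insert_into_block_def by blast
    hence "insert a B = insert a B2" using aX by (auto split: if_splits)
    hence "B = B2" using aX h(2,4) \<open>P2 = P\<close> by (metis insert_ident)
    thus "P = P2 \<and> B = B2" using \<open>P2 = P\<close> by simp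
  qed
  have "card (SIGMA P:?Q. P) = (\<Sum>P\<in>?Q. card P)"
    using finite_separating_partitions[OF fin] finite_elements[OF fin]
    by (intro card_SigmaI) (auto simp: separating_partitions_def)
  also have "\<dots> = k * card ?Q" by (simp add: separating_partitions_def)
  finally show ?thesis
    using separating_partitions_no_singleton_block[OF aA aR] card_image[OF inj] by simp
qed

lemma card_separating_partitions_insert:
  assumes "finite A" "a \<notin> A" "a \<notin> R"
  shows "card (separating_partitions R (insert a A) (Suc k))
           = Suc k * card (separating_partitions R A (Suc k)) + card (separating_partitions R A k)"
proof -
  let ?Q = "separating_partitions R (insert a A) (Suc k)"
  have "card ?Q = card {P \<in> ?Q. {a} \<notin> P} + card {P \<in> ?Q. {a} \<in> P}"
    using finite_separating_partitions[of "insert a A"] assms(1)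
    by (subst card_Un_disjoint[symmetric]) (auto intro: arg_cong[where f = card])
  thus ?thesis
    using card_separating_partitions_singleton_block[OF assms]
      card_separating_partitions_no_singleton_block[OF assms] by simp
qed

lemma r_stirling_eq_card: "r_stirling r n k = card (separating_partitions {1..r} {1..n} k)"
  by (simp add: r_stirling_def separating_partitions_def separates_def)

lemma r_stirling_Suc_Suc:
  assumes "r \<le> n"
  shows "r_stirling r (Suc n) (Suc k) = Suc k * r_stirling r n (Suc k) + r_stirling r n k"
proof -
  have "{1..Suc n} = insert (Suc n) {1..n}" by auto
  thus ?thesis
    unfolding r_stirling_eq_card using assms
    by (simp add: card_separating_partitions_insert)
qed

lemma r_stirling_diag: "r_stirling r r k = (if k = r then 1 else 0)"
proof -
  let ?S = "(\<lambda>x. {x}) ` {1..r}"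
  have "separating_partitions {1..r} {1..r} k \<subseteq> {?S}"
    using partition_separating_all by (auto simp: separating_partitions_def)
  moreover have "card ?S = r" by (simp add: card_image)
  moreover have "?S \<in> separating_partitions {1..r} {1..r} r"
    using partition_on_singletons calculation(2) by (auto simp: separating_partitions_def separates_def)
  ultimately have "separating_partitions {1..r} {1..r} k = (if k = r then {?S} else {})"
    by (auto simp: separating_partitions_def)
  thus ?thesis by (simp add: r_stirling_eq_card)
qed

lemma r_stirling_0_right: "0 < n \<Longrightarrow> r_stirling r n 0 = 0"
  by (simp add: r_stirling_eq_card separating_partitions_0_right)

lemma r_stirling_less:
  assumes "r \<le> n" "k < r"
  shows "r_stirling r n k = 0"
  using assms
proof (induction n arbitrary: k rule: dec_induct)
  case base thus ?case by (simp add: r_stirling_diag)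
next
  case (step n)
  thus ?case by (cases k) (simp_all add: r_stirling_0_right r_stirling_Suc_Suc)
qed

lemma r_stirling_greater:
  assumes "r \<le> n" "n < k"
  shows "r_stirling r n k = 0"
  using assms
proof (induction n arbitrary: k rule: dec_induct)
  case base thus ?case by (simp add: r_stirling_diag)
next
  case (step n)
  then obtain j where "k = Suc j" by (cases k) auto
  thus ?case using step by (simp add: r_stirling_Suc_Suc)
qed

definition fubini_term :: "nat \<Rightarrow> nat \<Rightarrow> nat \<Rightarrow> nat" where
  "fubini_term r n k = fact (k + r) * r_stirling r (n + r) (k + r)"

lemma r_fubini_eq_sum_fubini_term: "r_fubini n r = (\<Sum>k\<le>n. fubini_term r n k)"
  by (simp add: r_fubini_def fubini_term_def atLeast0AtMost)

lemma fubini_term_0: "fubini_term r 0 k = (if k = 0 then fact r else 0)"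
  by (simp add: fubini_term_def r_stirling_diag)

lemma fubini_term_greater: "n < k \<Longrightarrow> fubini_term r n k = 0"
  by (simp add: fubini_term_def r_stirling_greater)

lemma fubini_term_Suc:
  assumes "0 < r"
  shows "fubini_term r (Suc n) k
           = (k + r) * (fubini_term r n k + (case k of 0 \<Rightarrow> 0 | Suc j \<Rightarrow> fubini_term r n j))"
proof (cases k)
  case 0
  obtain q where r: "r = Suc q" using assms by (cases r) auto
  have "r_stirling r (n + r) q = 0" using r by (intro r_stirling_less) auto
  hence "r_stirling r (Suc (n + r)) r = r * r_stirling r (n + r) r"
    using r_stirling_Suc_Suc[of r "n + r" q] r by simp
  thus ?thesis using 0 by (simp add: fubini_term_def)
next
  case (Suc j)
  have "r_stirling r (Suc (n + r)) (Suc (j + r))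
          = Suc (j + r) * r_stirling r (n + r) (Suc (j + r)) + r_stirling r (n + r) (j + r)"
    by (simp add: r_stirling_Suc_Suc)
  thus ?thesis using Suc by (simp add: fubini_term_def algebra_simps)
qed

lemma r_fubini_mod_eq_truncated_sum:
  assumes "M dvd fact (N + r)"
  shows "r_fubini n r mod M = (\<Sum>k<N. fubini_term r n k) mod M"
proof -
  have "r_fubini n r = (\<Sum>k<N + Suc n. fubini_term r n k)"
    unfolding r_fubini_eq_sum_fubini_term
    by (rule sum.mono_neutral_left) (auto simp: fubini_term_greater)
  also have "\<dots> = (\<Sum>k<N. fubini_term r n k) + (\<Sum>k=N..<N + Suc n. fubini_term r n k)"
    by (simp add: sum.atLeastLessThan_concat[symmetric] lessThan_atLeast0)
  finally have split:
    "r_fubini n r = (\<Sum>k<N. fubini_term r n k) + (\<Sum>k=N..<N + Suc n. fubini_term r n k)" .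
  have "M dvd fubini_term r n k" if "N \<le> k" for k
  proof -
    have "fact (N + r) dvd (fact (k + r) :: nat)" using that by (intro fact_dvd) simp
    thus ?thesis using assms unfolding fubini_term_def by (meson dvd_mult2 dvd_trans)
  qed
  hence "M dvd (\<Sum>k=N..<N + Suc n. fubini_term r n k)" by (intro dvd_sum) simp
  thus ?thesis unfolding split by (metis dvd_imp_mod_0 add.right_neutral mod_add_right_eq)
qed

definition fubini_vector :: "nat \<Rightarrow> nat \<Rightarrow> nat \<Rightarrow> nat \<Rightarrow> nat list" where
  "fubini_vector r M N n = map (\<lambda>k. fubini_term r n k mod M) [0..<N]"

definition fubini_step :: "nat \<Rightarrow> nat \<Rightarrow> nat list \<Rightarrow> nat list" where
  "fubini_step r M xs =
     map (\<lambda>k. (k + r) * (xs ! k + (case k of 0 \<Rightarrow> 0 | Suc j \<Rightarrow> xs ! j)) mod M) [0..<length xs]"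

lemma fubini_vector_Suc:
  assumes "0 < r"
  shows "fubini_vector r M N (Suc n) = fubini_step r M (fubini_vector r M N n)"
proof -
  have "fubini_term r (Suc n) k mod M
          = (k + r) * (fubini_term r n k mod M
              + (case k of 0 \<Rightarrow> 0 | Suc j \<Rightarrow> fubini_term r n j mod M)) mod M" for k
  proof -
    have "(case k of 0 \<Rightarrow> 0 | Suc j \<Rightarrow> fubini_term r n j mod M)
            = (case k of 0 \<Rightarrow> 0 | Suc j \<Rightarrow> fubini_term r n j) mod M"
      by (cases k) simp_all
    thus ?thesis unfolding fubini_term_Suc[OF assms] by (metis mod_add_eq mod_mult_right_eq)
  qed
  thus ?thesis by (auto simp: fubini_vector_def fubini_step_def split: nat.split)
qed

lemma fubini_vector_eq_funpow:
  "0 < r \<Longrightarrow> fubini_vector r M N n = (fubini_step r M ^^ n) (fubini_vector r M N 0)"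
  by (induction n) (simp_all add: fubini_vector_Suc)

lemma r_fubini_mod_eq_sum_fubini_vector:
  assumes "M dvd fact (N + r)"
  shows "r_fubini n r mod M = sum_list (fubini_vector r M N n) mod M"
  unfolding r_fubini_mod_eq_truncated_sum[OF assms] fubini_vector_def
  by (simp add: sum_set_upt_conv_sum_list_nat[symmetric] lessThan_atLeast0 mod_sum_eq)

lemma funpow_eventually_periodic:
  fixes f :: "'a \<Rightarrow> 'a"
  assumes "(f ^^ (a + p)) x = (f ^^ a) x" "a \<le> n"
  shows "(f ^^ (n + p)) x = (f ^^ n) x"
proof -
  obtain d where n: "n = d + a" using assms(2) by (metis le_add_diff_inverse2)
  have "(f ^^ (n + p)) x = (f ^^ d) ((f ^^ (a + p)) x)"
    unfolding n by (simp add: funpow_add add.assoc)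
  also have "\<dots> = (f ^^ n) x" unfolding assms(1) n by (simp add: funpow_add)
  finally show ?thesis .
qed

lemma funpow_numeral: "(f ^^ numeral k) x = f ((f ^^ pred_numeral k) x)"
  by (simp add: numeral_eq_Suc)

lemma r_fubini_2_mod_64:
  "r_fubini n 2 mod 64 = sum_list ((fubini_step 2 64 ^^ n) [2, 0, 0, 0, 0, 0]) mod 64"
proof -
  have "(64::nat) dvd fact (6 + 2)" by (simp add: fact_numeral)
  hence "r_fubini n 2 mod 64 = sum_list (fubini_vector 2 64 6 n) mod 64"
    by (rule r_fubini_mod_eq_sum_fubini_vector)
  also have "fubini_vector 2 64 6 n = (fubini_step 2 64 ^^ n) (fubini_vector 2 64 6 0)"
    by (rule fubini_vector_eq_funpow) simp
  also have "fubini_vector 2 64 6 0 = [2, 0, 0, 0, 0, 0]"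
    by (simp add: fubini_vector_def fubini_term_0 upt_rec)
  finally show ?thesis .
qed

lemma r_fubini_2_mod_64_periodic:
  assumes "5 \<le> n"
  shows "r_fubini (n + 8) 2 mod 64 = r_fubini n 2 mod 64"
proof -
  have "(fubini_step 2 64 ^^ (5 + 8)) [2, 0, 0, 0, 0, 0] = (fubini_step 2 64 ^^ 5) [2, 0, 0, 0, 0, 0]"
    by (simp add: funpow_numeral fubini_step_def upt_rec)
  thus ?thesis
    unfolding r_fubini_2_mod_64 using funpow_eventually_periodic assms by metis
qed

lemma r_fubini_2_mod_64_period_2:
  "5 \<le> n \<Longrightarrow> r_fubini (n + 2) 2 mod 64 = r_fubini n 2 mod 64"
proof (induction n rule: less_induct)
  case (less n)
  show ?case
  proof (cases "n \<le> 12")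
    case True
    with less.prems consider "n = 5" | "n = 6" | "n = 7" | "n = 8" | "n = 9" | "n = 10"
      | "n = 11" | "n = 12" by linarith
    thus ?thesis
      by cases (simp_all add: r_fubini_2_mod_64 funpow_numeral fubini_step_def upt_rec)
  next
    case False
    define n' where "n' = n - 8"
    have n: "n = n' + 8" "5 \<le> n'" using False by (simp_all add: n'_def)
    have "r_fubini (n' + 2) 2 mod 64 = r_fubini n' 2 mod 64" using less n by simp
    thus ?thesis
      using r_fubini_2_mod_64_periodic[of n'] r_fubini_2_mod_64_periodic[of "n' + 2"] n
      by (simp add: add.commute add.left_commute)
  qed
qed

lemma r_fubini_2_period_2:
  assumes "2 \<le> n"
  shows "r_fubini (n + 2) 2 mod 2 ^ min (n + 1) 6 = r_fubini n 2 mod 2 ^ min (n + 1) 6"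
proof (cases "5 \<le> n")
  case True
  thus ?thesis using r_fubini_2_mod_64_period_2 by simp
next
  case False
  have dvd: "(2::nat) ^ min (n + 1) 6 dvd 64"
    using le_imp_power_dvd[of "min (n + 1) 6" 6 "2::nat"] by simp
  have reduce: "r_fubini k 2 mod 2 ^ min (n + 1) 6
          = sum_list ((fubini_step 2 64 ^^ k) [2, 0, 0, 0, 0, 0]) mod 2 ^ min (n + 1) 6" for k
  proof -
    have "r_fubini k 2 mod 2 ^ min (n + 1) 6 = r_fubini k 2 mod 64 mod 2 ^ min (n + 1) 6"
      by (rule mod_mod_cancel[OF dvd, symmetric])
    thus ?thesis by (simp only: r_fubini_2_mod_64 mod_mod_cancel[OF dvd])
  qed
  from False assms consider "n = 2" | "n = 3" | "n = 4" by linarith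
  thus ?thesis
    unfolding reduce by cases (simp_all add: funpow_numeral fubini_step_def upt_rec)
qed

theorem theorem4p1:
  fixes m n :: nat
  assumes "3 \<le> m" and "m \<le> 6" and "m - 1 \<le> n"
  shows "r_fubini (n + 2) 2 mod 2 ^ m = r_fubini n 2 mod 2 ^ m"
proof -
  have dvd: "(2::nat) ^ m dvd 2 ^ min (n + 1) 6" using assms by (intro le_imp_power_dvd) simp
  have "r_fubini (n + 2) 2 mod 2 ^ m = r_fubini (n + 2) 2 mod 2 ^ min (n + 1) 6 mod 2 ^ m"
    by (rule mod_mod_cancel[OF dvd, symmetric])
  also have "\<dots> = r_fubini n 2 mod 2 ^ min (n + 1) 6 mod 2 ^ m"
    using r_fubini_2_period_2 assms by simp
  also have "\<dots> = r_fubini n 2 mod 2 ^ m" by (rule mod_mod_cancel[OF dvd])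
  finally show ?thesis .
qed

end
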